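(* Let $(p,f)$ be an SCF-RT that is rationalizable within the class of all RUM-CFs, and let $(x,y)\in D$. Put $q=p(x,y)/p(y,x)$. If $F(y,x)$ $q$-FSD $F(x,y)$, then every RUM-CF $(u,g,r)$ that rationalizes $(p,f)$ satisfies $u(x)\geq u(y)$ (i.e. $(p,f)$ reveals a preference for $x$ over $y$). If $F(y,x)$ $q$-SFSD $F(x,y)$, then every RUM-CF that rationalizes $(p,f)$ satisfies $u(x)>u(y)$ (a revealed strict preference for $x$ over $y$).
   Context: $X$ is a finite set of options; $C=\{(x,y): x,y\in X,\ x\neq y\}$; $D\subseteq C$ is a fixed non-empty set with $(x,y)\in D\Rightarrow (y,x)\in D$. A stochastic choice function (SCF) $p$ assigns to each $(x,y)\in D$ a number $p(x,y)>0$ with $p(x,y)+p(y,x)=1$ (probability of choosing $x$ from $\{x,y\}$). An SCF with response times (SCF-RT) is a pair $(p,f)$ where $p$ is an SCF and $f$ assigns to each $(x,y)\in D$ a strictly positive probability density $f(x,y)$ on $\mathbb{R}^+$ (response time density conditional on choosing $x$ from $\{x,y\}$), with cdf $F(x,y)$. A random utility model (RUM) is a pair $(u,g)$ with $u:X\to\mathbb{R}$ and $g$ assigning to each $(x,y)\in C$ a density $g(x,y)$ on $\mathbb{R}$ (cdf $G(x,y)$) such that: $\int v\,g(x,y)(v)\,dv=u(x)-u(y)$; $g(x,y)(v)=g(y,x)(-v)$ for all $v$; and the support of $g(x,y)$ is connected. A RUM with a chronometric function (RUM-CF) is a triple $(u,g,r)$ where $(u,g)$ is a RUM and $r:\mathbb{R}^{++}\to\mathbb{R}^+$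 is continuous, strictly decreasing on the set where $r(v)>0$, with $\lim_{v\to0}r(v)=\infty$ and $\lim_{v\to\infty}r(v)=0$; $r^{-1}(t)$ for $t>0$ denotes the inverse of the restriction of $r$ to $\{v: r(v)>0\}$. A RUM-CF $(u,g,r)$ rationalizes an SCF-RT $(p,f)$ if for all $(x,y)\in D$: $G(x,y)(0)=p(y,x)$, and $\frac{1-G(x,y)(r^{-1}(t))}{1-G(x,y)(0)}=F(x,y)(t)$ for all $t>0$. For cdfs $G,H$ on $\mathbb{R}^+$ and a constant $q>0$, $G$ $q$-FSD $H$ means $G(t)\leq q\,H(t)$ for all $t\geq0$; $G$ $q$-SFSD $H$ means additionally the inequality is strict for some $t$. *)

theory Defs
  imports "HOL-Analysis.Analysis"
begin

text \<open>Options are the elements of a finite type 'a. Pairs (x,y) with x \<noteq> y form C.\<close>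

definition domain_ok :: "('a \<times> 'a) set \<Rightarrow> bool" where
  "domain_ok D \<longleftrightarrow> D \<noteq> {} \<and> D \<subseteq> {(x,y). x \<noteq> y} \<and> (\<forall>x y. (x,y) \<in> D \<longrightarrow> (y,x) \<in> D)"

text \<open>Stochastic choice function on D: p x y = probability of choosing x from {x,y}.\<close>
definition SCF :: "('a \<times> 'a) set \<Rightarrow> ('a \<Rightarrow> 'a \<Rightarrow> real) \<Rightarrow> bool" where
  "SCF D p \<longleftrightarrow> (\<forall>(x,y)\<in>D. p x y > 0 \<and> p x y + p y x = 1)"

definition pos_density_Rplus :: "(real \<Rightarrow> real) \<Rightarrow> bool" where
  "pos_density_Rplus h \<longleftrightarrow> (\<forall>t\<ge>0. h t > 0) \<and> (h has_integral 1) {0..}"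

definition cdf_Rplus :: "(real \<Rightarrow> real) \<Rightarrow> real \<Rightarrow> real" where
  "cdf_Rplus h t = integral {0..t} h"

definition SCF_RT :: "('a \<times> 'a) set \<Rightarrow> ('a \<Rightarrow> 'a \<Rightarrow> real) \<Rightarrow> ('a \<Rightarrow> 'a \<Rightarrow> real \<Rightarrow> real) \<Rightarrow> bool" where
  "SCF_RT D p f \<longleftrightarrow> SCF D p \<and> (\<forall>(x,y)\<in>D. pos_density_Rplus (f x y))"

definition density_R :: "(real \<Rightarrow> real) \<Rightarrow> bool" where
  "density_R h \<longleftrightarrow> (\<forall>v. h v \<ge> 0) \<and> (h has_integral 1) UNIV"

definition cdf_R :: "(real \<Rightarrow> real) \<Rightarrow> real \<Rightarrow> real" where
  "cdf_R h z = integral {..z} h"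

definition support :: "(real \<Rightarrow> real) \<Rightarrow> real set" where
  "support h = closure {v. h v > 0}"

definition RUM :: "('a \<Rightarrow> real) \<Rightarrow> ('a \<Rightarrow> 'a \<Rightarrow> real \<Rightarrow> real) \<Rightarrow> bool" where
  "RUM u g \<longleftrightarrow> (\<forall>x y. x \<noteq> y \<longrightarrow>
      density_R (g x y)
    \<and> ((\<lambda>v. v * g x y v) has_integral (u x - u y)) UNIV
    \<and> (\<forall>v. g x y v = g y x (- v))
    \<and> connected (support (g x y)))"

text \<open>Chronometric function r : R++ \<rightarrow> R+ (only its values on (0,\<infinity>) matter).\<close>
definition chronometric :: "(real \<Rightarrow> real) \<Rightarrow> bool" where
  "chronometric r \<longleftrightarrow> (\<forall>v>0. r v \<ge> 0)
    \<and> continuous_on {0<..} r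
    \<and> (\<forall>v w. 0 < v \<and> v < w \<and> r v > 0 \<and> r w > 0 \<longrightarrow> r w < r v)
    \<and> filterlim r at_top (at_right 0)
    \<and> (r \<longlongrightarrow> 0) at_top"

definition r_inv :: "(real \<Rightarrow> real) \<Rightarrow> real \<Rightarrow> real" where
  "r_inv r t = (THE v. v > 0 \<and> r v > 0 \<and> r v = t)"

definition RUM_CF :: "('a \<Rightarrow> real) \<Rightarrow> ('a \<Rightarrow> 'a \<Rightarrow> real \<Rightarrow> real) \<Rightarrow> (real \<Rightarrow> real) \<Rightarrow> bool" where
  "RUM_CF u g r \<longleftrightarrow> RUM u g \<and> chronometric r"

definition rationalizes ::
  "('a \<Rightarrow> real) \<Rightarrow> ('a \<Rightarrow> 'a \<Rightarrow> real \<Rightarrow> real) \<Rightarrow> (real \<Rightarrow> real) \<Rightarrow>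
   ('a \<times> 'a) set \<Rightarrow> ('a \<Rightarrow> 'a \<Rightarrow> real) \<Rightarrow> ('a \<Rightarrow> 'a \<Rightarrow> real \<Rightarrow> real) \<Rightarrow> bool" where
  "rationalizes u g r D p f \<longleftrightarrow> RUM_CF u g r \<and> (\<forall>(x,y)\<in>D.
      cdf_R (g x y) 0 = p y x
    \<and> (\<forall>t>0. (1 - cdf_R (g x y) (r_inv r t)) / (1 - cdf_R (g x y) 0) = cdf_Rplus (f x y) t))"

definition qFSD :: "real \<Rightarrow> (real \<Rightarrow> real) \<Rightarrow> (real \<Rightarrow> real) \<Rightarrow> bool" where
  "qFSD q G H \<longleftrightarrow> (\<forall>t\<ge>0. G t \<le> q * H t)"

definition qSFSD :: "real \<Rightarrow> (real \<Rightarrow> real) \<Rightarrow> (real \<Rightarrow> real) \<Rightarrow> bool" where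
  "qSFSD q G H \<longleftrightarrow> qFSD q G H \<and> (\<exists>t\<ge>0. G t < q * H t)"

end

theory Submission
  imports Defs
begin

(* Let V be the utility difference with density g(x,y); by symmetry g(y,x) is the density of -V,
   and E V = u x - u y.  At a response time t = r(w) the rationalization identities read
   P(V <= w) = 1 - p(x,y) F(x,y)(t) and P(-V <= w) = 1 - p(y,x) F(y,x)(t), so q-FSD says
   P(V <= w) <= P(-V <= w); for w beyond the range of r^-1 this holds because P(-V <= w) = 1.
   Such dominance forces E V >= 0: the truncated means m(T) = E[max (-T) (min V T)] satisfy
   m(t) - m(s) >= (t - s) (P(-V <= s) - P(V <= t)) >= - (t - s) P(s < -V <= t), so subdividing
   [s, t] finely shows that m increases on [0, oo), and m(T) tends to E V.  At a point of strict dominance the same bound,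
   with right continuity of the cdf, makes m increase strictly, so E V > 0. *)

section \<open>Real functions and their integrals\<close>

lemma mono_on_atLeast_if_drop_bounded:
  fixes h M :: "real \<Rightarrow> real"
  assumes drop: "\<And>s t. a \<le> s \<Longrightarrow> s \<le> t \<Longrightarrow> h s - h t \<le> (t - s) * (M t - M s)"
  shows "mono_on {a..} h"
proof (rule mono_onI)
  fix s t assume "s \<in> {a..}" "t \<in> {a..}" "s \<le> t"
  then have st: "a \<le> s" "s \<le> t" by auto
  define C where "C = (t - s) * (M t - M s)"
  have "h s - h t \<le> C / real n" if "0 < n" for n
  proof -
    define d where "d = (t - s) / real n"
    define x where "x i = s + real i * d" for i
    have x_step: "x (Suc i) - x i = d" for i
      by (simp add: x_def algebra_simps)
    have x_ends: "x 0 = s" "x n = t"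
      using that by (simp_all add: x_def d_def)
    have "0 \<le> d"
      using st by (simp add: d_def)
    then have x_mono: "a \<le> x i" "x i \<le> x (Suc i)" for i
      using st x_step[of i] by (auto simp: x_def intro: add_increasing2)
    have "h s - h t = (\<Sum>i<n. h (x i) - h (x (Suc i)))"
      using sum_lessThan_telescope'[of "\<lambda>i. h (x i)" n] by (simp add: x_ends)
    also have "\<dots> \<le> (\<Sum>i<n. d * (M (x (Suc i)) - M (x i)))"
      by (intro sum_mono) (metis drop x_mono x_step)
    also have "\<dots> = d * (M t - M s)"
      using sum_lessThan_telescope[of "\<lambda>i. M (x i)" n] by (simp add: sum_distrib_left[symmetric] x_ends)
    finally show ?thesis
      by (simp add: C_def d_def)
  qed
  then have "\<forall>n\<ge>1. h s - h t \<le> C / real n"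
    by simp
  then have "h s - h t \<le> 0"
    using LIMSEQ_le_const[OF lim_const_over_n[of C]] by blast
  then show "h s \<le> h t" by simp
qed

lemma tendsto_integral_Icc_at_right:
  fixes f :: "real \<Rightarrow> 'b::banach"
  assumes "f integrable_on {a..b}" "a < b"
  shows "((\<lambda>t. integral {a..t} f) \<longlongrightarrow> 0) (at_right a)"
  using continuous_on_Icc_at_rightD[OF indefinite_integral_continuous_1[OF assms(1)] assms(2)]
  by simp

lemma integrable_on_atLeast:
  fixes f :: "real \<Rightarrow> 'b::banach"
  assumes f: "f integrable_on UNIV"
  shows "f integrable_on {c..}"
proof -
  let ?g = "\<lambda>x. if x \<in> {c..} then f x else 0"
  have f_Icc: "f integrable_on {a..b}" for a b
    using f by (rule integrable_on_subinterval) simp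
  have g_box: "?g integrable_on cbox a b" for a b
    unfolding integrable_restrict_Int cbox_interval
    using f_Icc[of "max c a" b] by (simp add: Int_commute Int_atLeastAtMost)
  have g_restrict: "integral (cbox \<alpha> \<beta>) ?g = integral {c..\<beta>} f" if "\<alpha> \<le> c" for \<alpha> \<beta>
  proof -
    have "{c..} \<inter> cbox \<alpha> \<beta> = {c..\<beta>}"
      using that by (auto simp: cbox_interval)
    then show ?thesis
      by (simp only: integral_restrict_Int)
  qed
  have g_cauchy: "\<exists>L>0. \<forall>a b a' b'. ball 0 L \<subseteq> cbox a b \<and> cbox a b \<subseteq> cbox a' b' \<longrightarrow>
      norm (integral (cbox a b) ?g - integral (cbox a' b') ?g) < e" if "0 < e" for e
  proof -
    from f \<open>0 < e\<close> obtain B where "0 < B" and cauchy: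
      "\<And>a b a' b'. ball 0 B \<subseteq> {a..b} \<Longrightarrow> {a..b} \<subseteq> {a'..b'} \<Longrightarrow>
         norm (integral {a..b} f - integral {a'..b'} f) < e"
      unfolding integrable_alt_subset[of _ UNIV] by (auto simp: cbox_interval)
    define L where "L = max B \<bar>c\<bar>"
    have split: "integral {- L..d} f = integral {- L..c} f + integral {c..d} f" if "L \<le> d" for d
      using that
      by (intro Henstock_Kurzweil_Integration.integral_combine[symmetric] f_Icc)
        (auto simp: L_def abs_le_iff)
    show ?thesis
    proof (intro exI[of _ L] conjI allI impI)
      show "0 < L"
        using \<open>0 < B\<close> by (simp add: L_def)
      fix a b a' b' :: real assume "ball 0 L \<subseteq> cbox a b \<and> cbox a b \<subseteq> cbox a' b'"
      then have ends: "a' \<le> a" "a \<le> - L" "L \<le> b" "b \<le> b'"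
        using \<open>0 < B\<close>
        by (auto simp: L_def ball_eq_greaterThanLessThan cbox_interval
            greaterThanLessThan_subseteq_atLeastAtMost_iff)
      have "integral (cbox a b) ?g - integral (cbox a' b') ?g = integral {c..b} f - integral {c..b'} f"
        using g_restrict[of a b] g_restrict[of a' b'] ends by (simp add: L_def abs_le_iff)
      also have "\<dots> = integral {- L..b} f - integral {- L..b'} f"
        using split[of b] split[of b'] ends by simp
      finally show "norm (integral (cbox a b) ?g - integral (cbox a' b') ?g) < e"
        using ends
        by (simp add: cauchy L_def ball_eq_greaterThanLessThan
            greaterThanLessThan_subseteq_atLeastAtMost_iff)
    qed
  qed
  show ?thesis
    unfolding integrable_alt_subset[of _ "{c..}"] using g_box g_cauchy by blast
qed

section \<open>Densities and truncated means\<close>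

definition bounded_borel :: "(real \<Rightarrow> real) \<Rightarrow> bool" where
  "bounded_borel \<phi> \<longleftrightarrow> \<phi> \<in> borel_measurable borel \<and> bounded (range \<phi>)"

lemma bounded_borel_diff:
  "bounded_borel \<phi> \<Longrightarrow> bounded_borel \<psi> \<Longrightarrow> bounded_borel (\<lambda>v. \<phi> v - \<psi> v)"
  unfolding bounded_borel_def by (auto intro: bounded_minus_comp)

lemma bounded_borel_cmult: "bounded_borel \<phi> \<Longrightarrow> bounded_borel (\<lambda>v. c * \<phi> v)"
  unfolding bounded_borel_def
  using bounded_scaling[of "range \<phi>" c] by (auto simp: image_image)

lemma bounded_borel_indicator: "S \<in> sets borel \<Longrightarrow> bounded_borel (indicator S)"
  unfolding bounded_borel_def
  by (auto intro: borel_measurable_indicator bounded_subset[of "{0, 1}"] simp: indicator_def)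

definition clip :: "real \<Rightarrow> real \<Rightarrow> real" where
  "clip T v = max (- T) (min v T)"

lemma bounded_borel_clip: "bounded_borel (clip T)"
  unfolding bounded_borel_def clip_def bounded_iff
  by (intro conjI borel_measurable_max borel_measurable_min exI[of _ "\<bar>T\<bar>"]) auto

lemma abs_clip_le: "0 \<le> T \<Longrightarrow> \<bar>clip T v\<bar> \<le> \<bar>v\<bar>"
  unfolding clip_def by auto

lemma clip_eq_self: "\<bar>v\<bar> \<le> T \<Longrightarrow> clip T v = v"
  unfolding clip_def by auto

lemma clip_increment_ge:
  assumes "0 \<le> s" "s \<le> t"
  shows "(t - s) * (indicator {- s..} v - indicator {..t} v) \<le> clip t v - clip s v"
  using assms unfolding clip_def by (auto simp: indicator_def)

locale prob_density =
  fixes a :: "real \<Rightarrow> real"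
  assumes nonneg: "\<And>v. 0 \<le> a v"
    and total: "(a has_integral 1) UNIV"
begin

definition expect :: "(real \<Rightarrow> real) \<Rightarrow> real" where
  "expect \<phi> = integral UNIV (\<lambda>v. \<phi> v * a v)"

lemma absolutely_integrable_bounded_borel:
  assumes "bounded_borel \<phi>"
  shows "(\<lambda>v. \<phi> v * a v) absolutely_integrable_on UNIV"
proof (rule absolutely_integrable_bounded_measurable_product_real)
  show "\<phi> \<in> borel_measurable (lebesgue_on UNIV)"
    using assms by (simp add: bounded_borel_def lebesgue_on_UNIV_eq measurable_completion)
  show "bounded (\<phi> ` UNIV)"
    using assms by (simp add: bounded_borel_def)
  show "a absolutely_integrable_on UNIV"
    using total nonneg by (intro nonnegative_absolutely_integrable_1) auto
qed simp

lemma integrable_bounded_borel: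
  "bounded_borel \<phi> \<Longrightarrow> (\<lambda>v. \<phi> v * a v) integrable_on UNIV"
  using absolutely_integrable_bounded_borel absolutely_integrable_on_def by blast

lemma expect_diff:
  "bounded_borel \<phi> \<Longrightarrow> bounded_borel \<psi> \<Longrightarrow> expect (\<lambda>v. \<phi> v - \<psi> v) = expect \<phi> - expect \<psi>"
  unfolding expect_def by (simp add: left_diff_distrib integral_diff integrable_bounded_borel)

lemma expect_cmult: "expect (\<lambda>v. c * \<phi> v) = c * expect \<phi>"
  unfolding expect_def by (simp add: mult.assoc)

lemma expect_mono:
  "bounded_borel \<phi> \<Longrightarrow> bounded_borel \<psi> \<Longrightarrow> (\<And>v. \<phi> v \<le> \<psi> v) \<Longrightarrow> expect \<phi> \<le> expect \<psi>"
  unfolding expect_def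
  by (intro integral_le integrable_bounded_borel mult_right_mono nonneg)

lemma expect_indicator: "expect (indicator S) = integral S a"
  unfolding expect_def indicator_times_eq_if by (rule integral_restrict_UNIV)

lemma absolutely_integrable_on_borel:
  "S \<in> sets borel \<Longrightarrow> a absolutely_integrable_on S"
  using absolutely_integrable_bounded_borel[OF bounded_borel_indicator]
  by (simp add: indicator_times_eq_if absolutely_integrable_restrict_UNIV)

definition cdf :: "real \<Rightarrow> real" where
  "cdf c = expect (indicator {..c})"

definition cdf_refl :: "real \<Rightarrow> real" where
  "cdf_refl c = expect (indicator {- c..})"

lemma cdf_R_eq_cdf: "cdf_R a = cdf"
  by (simp add: fun_eq_iff cdf_R_def cdf_def expect_indicator)

lemma cdf_R_reflect_eq_cdf_refl: "cdf_R (\<lambda>v. a (- v)) = cdf_refl"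
proof
  fix c :: real
  have "integral {..c} (\<lambda>v. a (- v)) = integral {- c..} a"
    using has_absolute_integral_reflect_real[of "{..c}" "{- c..}" a]
      absolutely_integrable_on_borel[of "{- c..}"] by auto
  then show "cdf_R (\<lambda>v. a (- v)) c = cdf_refl c"
    by (simp add: cdf_R_def cdf_refl_def expect_indicator)
qed

lemma cdf_le_1: "cdf c \<le> 1"
proof -
  have "cdf c \<le> expect (indicator UNIV)"
    unfolding cdf_def
    by (intro expect_mono bounded_borel_indicator) (auto simp: indicator_def)
  also have "\<dots> = 1"
    by (metis expect_indicator integral_unique total)
  finally show ?thesis .
qed

lemma mono_cdf: "mono cdf"
  unfolding cdf_def
  by (intro monoI expect_mono bounded_borel_indicator) (auto simp: indicator_def)

lemma mono_cdf_refl: "mono cdf_refl"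
  unfolding cdf_refl_def
  by (intro monoI expect_mono bounded_borel_indicator) (auto simp: indicator_def)

lemma tendsto_cdf_at_right: "(cdf \<longlongrightarrow> cdf w) (at_right w)"
proof (rule tendsto_sandwich)
  have "cdf t \<le> cdf w + integral {w..t} a" if "w \<le> t" for t
  proof -
    have "cdf t - cdf w = expect (\<lambda>v. indicator {..t} v - indicator {..w} v)"
      unfolding cdf_def by (intro expect_diff[symmetric] bounded_borel_indicator) auto
    also have "\<dots> \<le> expect (indicator {w..t})"
      by (intro expect_mono bounded_borel_indicator bounded_borel_diff) (auto simp: indicator_def)
    finally show ?thesis
      by (simp add: expect_indicator)
  qed
  then show "eventually (\<lambda>t. cdf t \<le> cdf w + integral {w..t} a) (at_right w)"
    by (auto simp: eventually_at_right_field intro: exI[of _ "w + 1"])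
  show "eventually (\<lambda>t. cdf w \<le> cdf t) (at_right w)"
    using mono_cdf by (auto simp: eventually_at_right_field mono_def intro: exI[of _ "w + 1"])
  have "a integrable_on {w..w + 1}"
    using absolutely_integrable_on_borel[of "{w..w + 1}"] by (simp add: absolutely_integrable_on_def)
  then show "((\<lambda>t. cdf w + integral {w..t} a) \<longlongrightarrow> cdf w) (at_right w)"
    using tendsto_add[OF tendsto_const tendsto_integral_Icc_at_right] by fastforce
qed simp

end

locale prob_density_mean = prob_density +
  fixes \<mu> :: real
  assumes mean: "((\<lambda>v. v * a v) has_integral \<mu>) UNIV"
begin

lemma absolutely_integrable_mean: "(\<lambda>v. v * a v) absolutely_integrable_on UNIV"
proof (rule absolutely_integrable_absolutely_integrable_ubound)
  show "(\<lambda>v. v * a v) integrable_on UNIV"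
    using mean by blast
  then have "(\<lambda>v. v * a v) absolutely_integrable_on {0..}"
    by (intro nonnegative_absolutely_integrable_1 integrable_on_atLeast) (simp_all add: nonneg)
  then show "(\<lambda>v. if v \<in> {0..} then v * a v else 0) absolutely_integrable_on UNIV"
    unfolding absolutely_integrable_restrict_UNIV .
  show "v * a v \<le> (if v \<in> {0..} then v * a v else 0)" for v
    using nonneg[of v] by (simp add: mult_nonpos_nonneg)
qed

lemma tendsto_expect_clip: "(\<lambda>n. expect (clip (real n))) \<longlonglongrightarrow> \<mu>"
proof -
  have "(\<lambda>n. integral UNIV (\<lambda>v. clip (real n) v * a v)) \<longlonglongrightarrow> integral UNIV (\<lambda>v. v * a v)"
  proof (rule dominated_convergence(2))
    show "(\<lambda>v. clip (real n) v * a v) integrable_on UNIV" for n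
      by (rule integrable_bounded_borel[OF bounded_borel_clip])
    show "(\<lambda>v. norm (v * a v)) integrable_on UNIV"
      using absolutely_integrable_mean by (simp add: absolutely_integrable_on_def)
    show "norm (clip (real n) v * a v) \<le> norm (v * a v)" for n v
      using abs_clip_le[of "real n" v] nonneg[of v] by (simp add: abs_mult mult_right_mono)
    show "(\<lambda>n. clip (real n) v * a v) \<longlonglongrightarrow> v * a v" for v
    proof (rule tendsto_eventually)
      have "eventually (\<lambda>n. \<bar>v\<bar> \<le> real n) sequentially"
        using filterlim_real_sequentially unfolding filterlim_at_top by blast
      then show "eventually (\<lambda>n. clip (real n) v * a v = v * a v) sequentially"
        by eventually_elim (simp add: clip_eq_self)
    qed
  qed
  then show ?thesis
    using mean by (simp add: expect_def integral_unique)
qed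

lemma expect_clip_increment_ge:
  assumes "0 \<le> s" "s \<le> t"
  shows "(t - s) * (cdf_refl s - cdf t) \<le> expect (clip t) - expect (clip s)"
proof -
  have "(t - s) * (cdf_refl s - cdf t)
      = expect (\<lambda>v. (t - s) * (indicator {- s..} v - indicator {..t} v))"
    by (simp add: expect_cmult expect_diff bounded_borel_indicator cdf_def cdf_refl_def)
  also have "\<dots> \<le> expect (\<lambda>v. clip t v - clip s v)"
    using assms
    by (intro expect_mono bounded_borel_cmult bounded_borel_diff bounded_borel_indicator
        bounded_borel_clip clip_increment_ge) auto
  also have "\<dots> = expect (clip t) - expect (clip s)"
    by (intro expect_diff bounded_borel_clip)
  finally show ?thesis .
qed

lemma mono_on_expect_clip:
  assumes dom: "\<And>c. 0 < c \<Longrightarrow> cdf c \<le> cdf_refl c"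
  shows "mono_on {0..} (\<lambda>T. expect (clip T))"
proof (rule mono_on_atLeast_if_drop_bounded[where M = cdf_refl])
  fix s t :: real assume st: "0 \<le> s" "s \<le> t"
  have "(t - s) * (cdf_refl s - cdf_refl t) \<le> (t - s) * (cdf_refl s - cdf t)"
  proof (cases "s = t")
    case False
    with st have "cdf t \<le> cdf_refl t"
      by (intro dom) simp
    with st show ?thesis
      by (intro mult_left_mono) auto
  qed simp
  then show "expect (clip s) - expect (clip t) \<le> (t - s) * (cdf_refl t - cdf_refl s)"
    using expect_clip_increment_ge[OF st] by (simp add: algebra_simps)
qed

lemma expect_clip_le_mean:
  assumes mono: "mono_on {0..} (\<lambda>T. expect (clip T))" and "0 \<le> T"
  shows "expect (clip T) \<le> \<mu>"
proof (rule LIMSEQ_le_const[OF tendsto_expect_clip], intro exI allI impI)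
  fix n assume "nat \<lceil>T\<rceil> \<le> n"
  then have "T \<le> real n"
    by linarith
  with \<open>0 \<le> T\<close> show "expect (clip T) \<le> expect (clip (real n))"
    by (intro mono_onD[OF mono]) auto
qed

lemma expect_clip_0: "expect (clip 0) = 0"
  by (simp add: expect_def clip_def)

lemma mean_nonneg:
  assumes "\<And>c. 0 < c \<Longrightarrow> cdf c \<le> cdf_refl c"
  shows "0 \<le> \<mu>"
  using expect_clip_le_mean[OF mono_on_expect_clip[OF assms], of 0] by (simp add: expect_clip_0)

lemma mean_pos:
  assumes dom: "\<And>c. 0 < c \<Longrightarrow> cdf c \<le> cdf_refl c" and w: "0 < w" "cdf w < cdf_refl w"
  shows "0 < \<mu>"
proof -
  have mono: "mono_on {0..} (\<lambda>T. expect (clip T))"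
    using mono_on_expect_clip[OF dom] .
  have "eventually (\<lambda>t. w < t \<and> cdf t < cdf_refl w) (at_right w)"
    using eventually_at_right_less order_tendstoD(2)[OF tendsto_cdf_at_right w(2)]
    by (rule eventually_conj)
  then obtain t where t: "w < t" "cdf t < cdf_refl w"
    using eventually_happens' by force
  have "0 < (t - w) * (cdf_refl w - cdf t)"
    using t by simp
  also have "\<dots> \<le> expect (clip t) - expect (clip w)"
    using t w by (intro expect_clip_increment_ge) auto
  also have "\<dots> \<le> \<mu> - expect (clip 0)"
    using t w mono_onD[OF mono, of 0 w] expect_clip_le_mean[OF mono, of t] by simp
  finally show ?thesis
    by (simp add: expect_clip_0)
qed

end

section \<open>Chronometric functions\<close>

lemma chronometric_large_near_0:
  assumes "chronometric r" "0 < b"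
  shows "\<exists>v. 0 < v \<and> v < b \<and> y < r v"
proof -
  have "eventually (\<lambda>v. y < r v) (at_right 0)"
    using assms(1) unfolding chronometric_def filterlim_at_top_dense by blast
  moreover have "eventually (\<lambda>v. 0 < v \<and> v < b) (at_right (0::real))"
    using assms(2) by (auto simp: eventually_at_right_field intro: exI[of _ b])
  ultimately show ?thesis
    using eventually_happens'[OF trivial_limit_at_right_real] eventually_conj by blast
qed

lemma chronometric_continuous_on_Icc:
  "chronometric r \<Longrightarrow> 0 < a \<Longrightarrow> continuous_on {a..b} r"
  unfolding chronometric_def by (auto elim: continuous_on_subset)

lemma chronometric_attains:
  assumes r: "chronometric r" and "0 < t"
  shows "\<exists>v>0. r v = t"
proof -
  obtain v1 where v1: "0 < v1" "t < r v1"
    using chronometric_large_near_0[OF r zero_less_one] by blast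
  have "(r \<longlongrightarrow> 0) at_top"
    using r unfolding chronometric_def by blast
  from order_tendstoD(2)[OF this \<open>0 < t\<close>] obtain N where "\<And>v. N \<le> v \<Longrightarrow> r v < t"
    unfolding eventually_at_top_linorder by blast
  then have v2: "v1 \<le> max v1 N" "r (max v1 N) < t"
    by simp_all
  obtain v where "v1 \<le> v" "r v = t"
    using IVT2'[OF less_imp_le[OF v2(2)] less_imp_le[OF v1(2)] v2(1)]
      chronometric_continuous_on_Icc[OF r v1(1)] by blast
  with v1 show ?thesis
    by (intro exI[of _ v]) auto
qed

lemma chronometric_inj:
  assumes r: "chronometric r" and "0 < v" "0 < w" "0 < r v" "r v = r w"
  shows "v = w"
proof -
  have decr: "r y < r x" if "0 < x" "x < y" "0 < r x" "0 < r y" for x y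
    using r that unfolding chronometric_def by blast
  show ?thesis
    using decr[of v w] decr[of w v] assms by (cases v w rule: linorder_cases) auto
qed

lemma r_inv_r:
  assumes "chronometric r" "0 < v" "0 < r v"
  shows "r_inv r (r v) = v"
  unfolding r_inv_def using assms chronometric_inj[OF assms(1)]
  by (intro the_equality) auto

lemma r_r_inv:
  assumes "chronometric r" "0 < t"
  shows "0 < r_inv r t" "r (r_inv r t) = t"
  using chronometric_attains[OF assms] r_inv_r[OF assms(1)] assms(2) by auto

lemma chronometric_zero_upward:
  assumes r: "chronometric r" and w: "0 < w" "r w = 0" and "w \<le> z"
  shows "r z = 0"
proof (rule ccontr)
  assume "r z \<noteq> 0"
  moreover have "0 \<le> r z"
    using r w \<open>w \<le> z\<close> unfolding chronometric_def by simp
  ultimately have rz: "0 < r z"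
    by simp
  obtain v where v: "0 < v" "v < w" "r z < r v"
    using chronometric_large_near_0[OF r w(1)] by blast
  obtain v' where v': "v \<le> v'" "v' \<le> w" "r v' = r z"
    using IVT2'[of r w "r z" v] chronometric_continuous_on_Icc[OF r v(1)] v w rz by auto
  then have "v' = z"
    using chronometric_inj[OF r, of v' z] v w \<open>w \<le> z\<close> rz by simp
  with v' w \<open>w \<le> z\<close> rz show False
    by simp
qed

lemma r_inv_less:
  assumes r: "chronometric r" and w: "0 < w" "r w = 0" and "0 < t"
  shows "r_inv r t < w"
  using chronometric_zero_upward[OF r w, of "r_inv r t"] r_r_inv[OF r \<open>0 < t\<close>] \<open>0 < t\<close>
  by linarith


section \<open>Rationalized choices and response times\<close>

lemma tendsto_cdf_Rplus_at_right_0: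
  assumes "pos_density_Rplus h"
  shows "(cdf_Rplus h \<longlongrightarrow> 0) (at_right 0)"
proof -
  have "(h has_integral 1) {0..}"
    using assms unfolding pos_density_Rplus_def by blast
  then have "h integrable_on {0..1}"
    by (intro integrable_on_subinterval[of _ "{0..}"]) auto
  then show ?thesis
    unfolding cdf_Rplus_def[abs_def] by (rule tendsto_integral_Icc_at_right) simp
qed

lemma cdf_Rplus_0: "cdf_Rplus h 0 = 0"
  by (simp add: cdf_Rplus_def)

lemma RUM_prob_density_mean:
  assumes "RUM u g" "x \<noteq> y"
  shows "prob_density_mean (g x y) (u x - u y)"
proof -
  have "density_R (g x y)" "((\<lambda>v. v * g x y v) has_integral (u x - u y)) UNIV"
    using assms(1)[unfolded RUM_def, rule_format, OF assms(2)] by blast+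
  then show ?thesis
    unfolding density_R_def by unfold_locales simp_all
qed

lemma RUM_reflect:
  assumes "RUM u g" "x \<noteq> y"
  shows "g y x = (\<lambda>v. g x y (- v))"
proof -
  have "y \<noteq> x"
    using assms(2) by simp
  then show ?thesis
    using assms(1)[unfolded RUM_def, rule_format, of y x] by (simp add: fun_eq_iff)
qed

lemma RUM_utility_le_if_cdf_R_dominated:
  assumes rum: "RUM u g" and "x \<noteq> y"
    and dom: "\<And>c. 0 < c \<Longrightarrow> cdf_R (g x y) c \<le> cdf_R (g y x) c"
  shows "u y \<le> u x"
    and "\<exists>w>0. cdf_R (g x y) w < cdf_R (g y x) w \<Longrightarrow> u y < u x"
proof -
  interpret prob_density_mean "g x y" "u x - u y"
    using RUM_prob_density_mean[OF rum \<open>x \<noteq> y\<close>] .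
  have cdfs: "cdf_R (g x y) = cdf" "cdf_R (g y x) = cdf_refl"
    by (simp_all add: RUM_reflect[OF rum \<open>x \<noteq> y\<close>] cdf_R_eq_cdf cdf_R_reflect_eq_cdf_refl)
  show "u y \<le> u x"
    using mean_nonneg dom unfolding cdfs by simp
  show "u y < u x" if "\<exists>w>0. cdf_R (g x y) w < cdf_R (g y x) w"
    using mean_pos dom that unfolding cdfs by force
qed

lemma rationalizes_cdf_R_at_r_inv:
  assumes rat: "rationalizes u g r D p f" and scf: "SCF D p" and xy: "(x, y) \<in> D" and "0 < t"
  shows "cdf_R (g x y) (r_inv r t) = 1 - p x y * cdf_Rplus (f x y) t"
proof -
  have "0 < p x y" and sum1: "p x y + p y x = 1"
    using scf xy unfolding SCF_def by auto
  have "cdf_R (g x y) 0 = p y x"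
    and ratio: "(1 - cdf_R (g x y) (r_inv r t)) / (1 - cdf_R (g x y) 0) = cdf_Rplus (f x y) t"
    using rat xy \<open>0 < t\<close> unfolding rationalizes_def by blast+
  moreover have "1 - p y x = p x y"
    using sum1 by simp
  ultimately have "(1 - cdf_R (g x y) (r_inv r t)) / p x y = cdf_Rplus (f x y) t"
    by simp
  with \<open>0 < p x y\<close> show ?thesis
    by (simp add: field_simps)
qed

lemma rationalizes_cdf_R_diff_at_r_inv:
  assumes rat: "rationalizes u g r D p f" and scf: "SCF D p"
    and xy: "(x, y) \<in> D" "(y, x) \<in> D" and "0 < t"
  shows "cdf_R (g y x) (r_inv r t) - cdf_R (g x y) (r_inv r t)
       = p y x * (p x y / p y x * cdf_Rplus (f x y) t - cdf_Rplus (f y x) t)"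
proof -
  have "0 < p y x"
    using scf xy unfolding SCF_def by auto
  have "cdf_R (g y x) (r_inv r t) - cdf_R (g x y) (r_inv r t)
      = p x y * cdf_Rplus (f x y) t - p y x * cdf_Rplus (f y x) t"
    by (simp add: rationalizes_cdf_R_at_r_inv[OF rat scf xy(1) \<open>0 < t\<close>]
        rationalizes_cdf_R_at_r_inv[OF rat scf xy(2) \<open>0 < t\<close>])
  also have "\<dots> = p y x * (p x y / p y x * cdf_Rplus (f x y) t - cdf_Rplus (f y x) t)"
    using \<open>0 < p y x\<close> by (simp add: field_simps)
  finally show ?thesis .
qed

lemma rationalizes_RUM_chronometric:
  "rationalizes u g r D p f \<Longrightarrow> RUM u g \<and> chronometric r"
  by (simp add: rationalizes_def RUM_CF_def)

lemma rationalizes_qFSD_cdf_R_le: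
  assumes rat: "rationalizes u g r D p f" and pf: "SCF_RT D p f"
    and xy: "(x, y) \<in> D" "(y, x) \<in> D" "x \<noteq> y"
    and FSD: "qFSD (p x y / p y x) (cdf_Rplus (f y x)) (cdf_Rplus (f x y))" and "0 < c"
  shows "cdf_R (g x y) c \<le> cdf_R (g y x) c"
proof -
  have scf: "SCF D p"
    using pf unfolding SCF_RT_def by blast
  have "0 < p y x"
    using scf xy(2) unfolding SCF_def by auto
  have rum: "RUM u g" and r: "chronometric r"
    using rationalizes_RUM_chronometric[OF rat] by blast+
  interpret prob_density_mean "g x y" "u x - u y"
    using RUM_prob_density_mean[OF rum xy(3)] .
  have cdfs: "cdf_R (g x y) = cdf" "cdf_R (g y x) = cdf_refl"
    by (simp_all add: RUM_reflect[OF rum xy(3)] cdf_R_eq_cdf cdf_R_reflect_eq_cdf_refl)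
  show ?thesis
  proof (cases "r c = 0")
    case False
    moreover have "0 \<le> r c"
      using r \<open>0 < c\<close> unfolding chronometric_def by blast
    ultimately have "0 < r c"
      by simp
    have "cdf_Rplus (f y x) (r c) \<le> p x y / p y x * cdf_Rplus (f x y) (r c)"
      using FSD \<open>0 < r c\<close> unfolding qFSD_def by simp
    then have "0 \<le> cdf_R (g y x) (r_inv r (r c)) - cdf_R (g x y) (r_inv r (r c))"
      unfolding rationalizes_cdf_R_diff_at_r_inv[OF rat scf xy(1,2) \<open>0 < r c\<close>]
      using \<open>0 < p y x\<close> by simp
    then show ?thesis
      using r_inv_r[OF r \<open>0 < c\<close> \<open>0 < r c\<close>] by simp
  next
    case True
    \<comment> \<open>Then every r_inv r t lies below c, and response times near 0 have vanishing probability.\<close>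
    have "pos_density_Rplus (f y x)"
      using pf xy(2) unfolding SCF_RT_def by auto
    then have "((\<lambda>t. 1 - p y x * cdf_Rplus (f y x) t) \<longlongrightarrow> 1 - p y x * 0) (at_right 0)"
      by (intro tendsto_intros tendsto_cdf_Rplus_at_right_0)
    moreover have "eventually (\<lambda>t. 1 - p y x * cdf_Rplus (f y x) t \<le> cdf_refl c) (at_right 0)"
    proof (rule eventually_mono[OF eventually_at_right_less])
      fix t :: real assume "0 < t"
      have "1 - p y x * cdf_Rplus (f y x) t = cdf_refl (r_inv r t)"
        using rationalizes_cdf_R_at_r_inv[OF rat scf xy(2) \<open>0 < t\<close>] cdfs by simp
      also have "\<dots> \<le> cdf_refl c"
        using mono_cdf_refl r_inv_less[OF r \<open>0 < c\<close> True \<open>0 < t\<close>] by (simp add: mono_def)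
      finally show "1 - p y x * cdf_Rplus (f y x) t \<le> cdf_refl c" .
    qed
    ultimately have "1 \<le> cdf_refl c"
      by (simp add: tendsto_upperbound)
    then show ?thesis
      using cdf_le_1[of c] cdfs by simp
  qed
qed

lemma rationalizes_qSFSD_cdf_R_less:
  assumes rat: "rationalizes u g r D p f" and scf: "SCF D p" and xy: "(x, y) \<in> D" "(y, x) \<in> D"
    and SFSD: "qSFSD (p x y / p y x) (cdf_Rplus (f y x)) (cdf_Rplus (f x y))"
  shows "\<exists>w>0. cdf_R (g x y) w < cdf_R (g y x) w"
proof -
  obtain t where "0 \<le> t" and less: "cdf_Rplus (f y x) t < p x y / p y x * cdf_Rplus (f x y) t"
    using SFSD unfolding qSFSD_def by blast
  moreover have "t \<noteq> 0"
    using less by (auto simp: cdf_Rplus_0)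
  ultimately have "0 < t"
    by simp
  have "0 < p y x"
    using scf xy(2) unfolding SCF_def by auto
  with less have "0 < cdf_R (g y x) (r_inv r t) - cdf_R (g x y) (r_inv r t)"
    unfolding rationalizes_cdf_R_diff_at_r_inv[OF rat scf xy \<open>0 < t\<close>] by simp
  moreover have "0 < r_inv r t"
    using rationalizes_RUM_chronometric[OF rat] r_r_inv(1) \<open>0 < t\<close> by blast
  ultimately show ?thesis
    by (intro exI[of _ "r_inv r t"]) simp
qed

theorem theorem1:
  fixes D :: "('a::finite \<times> 'a) set"
    and p :: "'a \<Rightarrow> 'a \<Rightarrow> real"
    and f :: "'a \<Rightarrow> 'a \<Rightarrow> real \<Rightarrow> real"
    and x y :: 'a and q :: real
  assumes "domain_ok D"
    and "SCF_RT D p f"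
    and "\<exists>u g r. rationalizes u g r D p f"
    and "(x, y) \<in> D"
    and "q = p x y / p y x"
  shows "(qFSD q (cdf_Rplus (f y x)) (cdf_Rplus (f x y)) \<longrightarrow>
            (\<forall>u g r. rationalizes u g r D p f \<longrightarrow> u x \<ge> u y))
       \<and> (qSFSD q (cdf_Rplus (f y x)) (cdf_Rplus (f x y)) \<longrightarrow>
            (\<forall>u g r. rationalizes u g r D p f \<longrightarrow> u x > u y))"
proof -
  have xy: "(x, y) \<in> D" "(y, x) \<in> D" "x \<noteq> y"
    using assms(1,4) unfolding domain_ok_def by auto
  have scf: "SCF D p"
    using assms(2) unfolding SCF_RT_def by blast
  have "u y \<le> u x \<and> (qSFSD q (cdf_Rplus (f y x)) (cdf_Rplus (f x y)) \<longrightarrow> u y < u x)"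
    if FSD: "qFSD q (cdf_Rplus (f y x)) (cdf_Rplus (f x y))" and rat: "rationalizes u g r D p f"
    for u g r
  proof -
    have rum: "RUM u g"
      using rationalizes_RUM_chronometric[OF rat] by blast
    have dom: "cdf_R (g x y) c \<le> cdf_R (g y x) c" if "0 < c" for c
      using rationalizes_qFSD_cdf_R_le[OF rat assms(2) xy] FSD that assms(5) by simp
    show ?thesis
      using RUM_utility_le_if_cdf_R_dominated[OF rum xy(3) dom]
        rationalizes_qSFSD_cdf_R_less[OF rat scf xy(1,2)] assms(5) by auto
  qed
  then show ?thesis
    unfolding qSFSD_def by auto
qed

end
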